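(* In the standing setting, let $(A,B,R,\sigma)$ be a normalized context and $(g,f)\in\mathcal{FC}$ with $g^{\uparrow}\ne f_\bot$ and $f^{\downarrow}\ne g_\bot$. Then $\langle f^{\downarrow},f\rangle$ and $\langle g,g^{\uparrow}\rangle$ belong to $\mathcal M$ and $\langle f^{\downarrow},f\rangle\preceq\langle g,g^{\uparrow}\rangle$ (equivalently, $f^{\downarrow}\preceq_2 g$ pointwise).
   Context: Adjoint triple: for posets $(P_1,\le_1),(P_2,\le_2),(P_3,\le_3)$, maps $\&\colon P_1\times P_2\to P_3$, $\swarrow\colon P_3\times P_2\to P_1$, $\nwarrow\colon P_3\times P_1\to P_2$ with $x\le_1 z\swarrow y \iff x\,\&\,y\le_3 z \iff y\le_2 z\nwarrow x$ for all $x,y,z$. For lower-bounded posets, $\&$ has zero-divisors if there are $x\ne\bot_1$, $y\neq\bot_2$ with $x\,\&\,y=\bot_3$. Standing setting: $(L_1,\preceq_1,\bot_1,\top_1)$ and $(L_2,\preceq_2,\bot_2,\top_2)$ are complete lattices and $(P,\le,\bot,\top)$ is a bounded poset. A multi-adjoint frame consists of adjoint triples $(\&_i,\swarrow^i,\nwarrow_i)$, $i=1,\dots,n$, with respect to $L_1,L_2,P$; a property-oriented frame consists of adjoint triples $(\&^p_j,\swarrow_p^j,\nwarrow^p_j)$, $j=1,\dots,m$, with respect to $P,L_2,L_1$; an object-oriented frame consists of adjoint triples $(\&^o_k,\swarrow_o^k,\nwarrow^o_k)$, $k=1,\dots,s$, with respect to $L_1,P,L_2$. All conjunctors $\&_i,\&^p_j,\&^o_k$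 have no zero-divisors. A context $(A,B,R,\sigma)$ consists of non-empty sets $A,B$, $R\colon A\times B\to P$, and maps $\sigma,\sigma_p,\sigma_o$ from $A\times B$ to the index sets of the three frames. It is normalized if every $a\in A$ has $b_1,b_2\in B$ with $R(a,b_1)\ne\bot$, $R(a,b_2)=\bot$, and every $b\in B$ has $a_1,a_2\in A$ with $R(a_1,b)\neq\bot$, $R(a_2,b)=\bot$. Concept-forming operators: $g^{\uparrow}(a)=\inf\{R(a,b)\swarrow^{\sigma(a,b)}g(b)\mid b\in B\}$ for $g\in L_2^B$ and $f^{\downarrow}(b)=\inf\{R(a,b)\nwarrow_{\sigma(a,b)}f(a)\mid a\in A\}$ for $f\in L_1^A$. Multi-adjoint concept lattice $\mathcal M=\{\langle g,f\rangle\mid g\in L_2^B,f\in L_1^A,\ g^{\uparrow}=f,\ f^{\downarrow}=g\}$, ordered by $\langle g_1,f_1\rangle\preceq\langle g_2,f_2\rangle$ iff $g_1\preceq_2 g_2$ pointwise. Fuzzy necessity operators: $g^{\uparrow_N}(a)=\inf\{g(b)\swarrow_o^{\sigma_o(a,b)}R(a,b)\mid b\in B\}$ and $f^{\downarrow^N}(b)=\inf\{f(a)\nwarrow^p_{\sigma_p(a,b)}R(a,b)\mid a\in A\}$. $\mathcal F_N=\{(g,f)\mid g\in L_2^B,\ f\in L_1^A,\ g^{\uparrow_N}=f,\ f^{\downarrow^N}=g\}$. For $X\subseteq B$, $\chi_X\in L_2^B$ takes value $\top_2$ on $X$ and $\bot_2$ elsewhere; for $Y\subseteq A$, $\chi_Y\in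 L_1^A$ takes value $\top_1$ on $Y$ and $\bot_1$ elsewhere. $\mathcal{FC}=\{(\chi_X,\chi_Y)\in\mathcal F_N\mid \varnothing\ne X\subsetneq B,\ \varnothing\neq Y\subsetneq A\}$. $g_\bot\in L_2^B$, $f_\bot\in L_1^A$ are the constant maps with values $\bot_2,\bot_1$. *)

theory Defs
  imports Main
begin

definition adjoint_triple ::
  "('p1::order \<Rightarrow> 'p2::order \<Rightarrow> 'p3::order) \<Rightarrow> ('p3 \<Rightarrow> 'p2 \<Rightarrow> 'p1) \<Rightarrow> ('p3 \<Rightarrow> 'p1 \<Rightarrow> 'p2) \<Rightarrow> bool"
where
  "adjoint_triple cj sw nw \<longleftrightarrow>
     (\<forall>x y z. (x \<le> sw z y \<longleftrightarrow> cj x y \<le> z) \<and> (cj x y \<le> z \<longleftrightarrow> y \<le> nw z x))"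

definition no_zero_divisors ::
  "('p1::order_bot \<Rightarrow> 'p2::order_bot \<Rightarrow> 'p3::order_bot) \<Rightarrow> bool"
where
  "no_zero_divisors cj \<longleftrightarrow> (\<forall>x y. x \<noteq> bot \<longrightarrow> y \<noteq> bot \<longrightarrow> cj x y \<noteq> bot)"

definition frame ::
  "nat \<Rightarrow> (nat \<Rightarrow> 'p1::order_bot \<Rightarrow> 'p2::order_bot \<Rightarrow> 'p3::order_bot) \<Rightarrow>
   (nat \<Rightarrow> 'p3 \<Rightarrow> 'p2 \<Rightarrow> 'p1) \<Rightarrow> (nat \<Rightarrow> 'p3 \<Rightarrow> 'p1 \<Rightarrow> 'p2) \<Rightarrow> bool"
where
  "frame n cj sw nw \<longleftrightarrow>
     (\<forall>i\<in>{1..n}. adjoint_triple (cj i) (sw i) (nw i) \<and> no_zero_divisors (cj i))"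

text \<open>Normalized context; objects A and attributes B are the (nonempty) types.\<close>
definition normalized :: "('o \<Rightarrow> 'at \<Rightarrow> 'c::order_bot) \<Rightarrow> bool" where
  "normalized R \<longleftrightarrow>
     (\<forall>a. (\<exists>b1. R a b1 \<noteq> bot) \<and> (\<exists>b2. R a b2 = bot)) \<and>
     (\<forall>b. (\<exists>a1. R a1 b \<noteq> bot) \<and> (\<exists>a2. R a2 b = bot))"

definition up_op ::
  "(nat \<Rightarrow> 'c \<Rightarrow> 'b \<Rightarrow> 'a::complete_lattice) \<Rightarrow> ('o \<Rightarrow> 'at \<Rightarrow> nat) \<Rightarrow>
   ('o \<Rightarrow> 'at \<Rightarrow> 'c) \<Rightarrow> ('at \<Rightarrow> 'b) \<Rightarrow> ('o \<Rightarrow> 'a)"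
where
  "up_op sw \<sigma> R g = (\<lambda>a. Inf {sw (\<sigma> a b) (R a b) (g b) | b. True})"

definition down_op ::
  "(nat \<Rightarrow> 'c \<Rightarrow> 'a \<Rightarrow> 'b::complete_lattice) \<Rightarrow> ('o \<Rightarrow> 'at \<Rightarrow> nat) \<Rightarrow>
   ('o \<Rightarrow> 'at \<Rightarrow> 'c) \<Rightarrow> ('o \<Rightarrow> 'a) \<Rightarrow> ('at \<Rightarrow> 'b)"
where
  "down_op nw \<sigma> R f = (\<lambda>b. Inf {nw (\<sigma> a b) (R a b) (f a) | a. True})"

definition upN_op ::
  "(nat \<Rightarrow> 'b \<Rightarrow> 'c \<Rightarrow> 'a::complete_lattice) \<Rightarrow> ('o \<Rightarrow> 'at \<Rightarrow> nat) \<Rightarrow>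
   ('o \<Rightarrow> 'at \<Rightarrow> 'c) \<Rightarrow> ('at \<Rightarrow> 'b) \<Rightarrow> ('o \<Rightarrow> 'a)"
where
  "upN_op swo \<sigma>o R g = (\<lambda>a. Inf {swo (\<sigma>o a b) (g b) (R a b) | b. True})"

definition downN_op ::
  "(nat \<Rightarrow> 'a \<Rightarrow> 'c \<Rightarrow> 'b::complete_lattice) \<Rightarrow> ('o \<Rightarrow> 'at \<Rightarrow> nat) \<Rightarrow>
   ('o \<Rightarrow> 'at \<Rightarrow> 'c) \<Rightarrow> ('o \<Rightarrow> 'a) \<Rightarrow> ('at \<Rightarrow> 'b)"
where
  "downN_op nwp \<sigma>p R f = (\<lambda>b. Inf {nwp (\<sigma>p a b) (f a) (R a b) | a. True})"

definition chi :: "'x set \<Rightarrow> 'x \<Rightarrow> 'l::complete_lattice" where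
  "chi X = (\<lambda>x. if x \<in> X then top else bot)"

definition MAC ::
  "(nat \<Rightarrow> 'c \<Rightarrow> 'b \<Rightarrow> 'a::complete_lattice) \<Rightarrow> (nat \<Rightarrow> 'c \<Rightarrow> 'a \<Rightarrow> 'b::complete_lattice) \<Rightarrow>
   ('o \<Rightarrow> 'at \<Rightarrow> nat) \<Rightarrow> ('o \<Rightarrow> 'at \<Rightarrow> 'c) \<Rightarrow> (('at \<Rightarrow> 'b) \<times> ('o \<Rightarrow> 'a)) set"
where
  "MAC sw nw \<sigma> R = {(g, f). up_op sw \<sigma> R g = f \<and> down_op nw \<sigma> R f = g}"

definition FN ::
  "(nat \<Rightarrow> 'b \<Rightarrow> 'c \<Rightarrow> 'a::complete_lattice) \<Rightarrow> ('o \<Rightarrow> 'at \<Rightarrow> nat) \<Rightarrow>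
   (nat \<Rightarrow> 'a \<Rightarrow> 'c \<Rightarrow> 'b::complete_lattice) \<Rightarrow> ('o \<Rightarrow> 'at \<Rightarrow> nat) \<Rightarrow>
   ('o \<Rightarrow> 'at \<Rightarrow> 'c) \<Rightarrow> (('at \<Rightarrow> 'b) \<times> ('o \<Rightarrow> 'a)) set"
where
  "FN swo \<sigma>o nwp \<sigma>p R = {(g, f). upN_op swo \<sigma>o R g = f \<and> downN_op nwp \<sigma>p R f = g}"

definition FC ::
  "(nat \<Rightarrow> 'b \<Rightarrow> 'c \<Rightarrow> 'a::complete_lattice) \<Rightarrow> ('o \<Rightarrow> 'at \<Rightarrow> nat) \<Rightarrow>
   (nat \<Rightarrow> 'a \<Rightarrow> 'c \<Rightarrow> 'b::complete_lattice) \<Rightarrow> ('o \<Rightarrow> 'at \<Rightarrow> nat) \<Rightarrow>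
   ('o \<Rightarrow> 'at \<Rightarrow> 'c) \<Rightarrow> (('at \<Rightarrow> 'b) \<times> ('o \<Rightarrow> 'a)) set"
where
  "FC swo \<sigma>o nwp \<sigma>p R =
     {(chi X, chi Y) | X Y. (chi X, chi Y) \<in> FN swo \<sigma>o nwp \<sigma>p R \<and>
        X \<noteq> {} \<and> X \<noteq> UNIV \<and> Y \<noteq> {} \<and> Y \<noteq> UNIV}"

definition concept_le :: "(('at \<Rightarrow> 'b::order) \<times> ('o \<Rightarrow> 'a)) \<Rightarrow> (('at \<Rightarrow> 'b) \<times> ('o \<Rightarrow> 'a)) \<Rightarrow> bool" where
  "concept_le p q \<longleftrightarrow> fst p \<le> fst q"

end

theory Submission
  imports Defs
begin

text \<open>Because \<open>(\<chi>\<^sub>X, \<chi>\<^sub>Y)\<close> is fixed by the necessity operators and no conjunctor has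
  zero-divisors, \<open>R\<close> vanishes on \<open>Y \<times> -X\<close> and on \<open>-Y \<times> X\<close>. For such a block-diagonal
  relation, \<open>\<chi>\<^sub>Y\<^sup>\<down>\<close> vanishes off \<open>X\<close>. If \<open>a \<notin> Y\<close>, pick \<open>b\<close> with \<open>\<chi>\<^sub>Y\<^sup>\<down> b \<noteq> \<bottom>\<close>; then
  \<open>b \<in> X\<close>, so \<open>R a b = \<bottom>\<close>, and \<open>\<bottom> \<swarrow> y = \<bottom>\<close> for \<open>y \<noteq> \<bottom>\<close> forces \<open>\<chi>\<^sub>Y\<^sup>\<down>\<^sup>\<up> a = \<bottom>\<close>. The reverse
  inequality \<open>\<chi>\<^sub>Y \<le> \<chi>\<^sub>Y\<^sup>\<down>\<^sup>\<up>\<close> is extensivity of the Galois connection \<open>(\<up>, \<down>)\<close>, and the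
  argument for \<open>\<chi>\<^sub>X\<^sup>\<up>\<close> is symmetric.\<close>

lemma adjoint_triple_sw_iff:
  "adjoint_triple cj sw nw \<Longrightarrow> x \<le> sw z y \<longleftrightarrow> cj x y \<le> z"
  unfolding adjoint_triple_def by blast

lemma adjoint_triple_nw_iff:
  "adjoint_triple cj sw nw \<Longrightarrow> y \<le> nw z x \<longleftrightarrow> cj x y \<le> z"
  unfolding adjoint_triple_def by blast

lemma no_zero_divisors_le_bot:
  "no_zero_divisors cj \<Longrightarrow> cj x y \<le> bot \<Longrightarrow> x = bot \<or> y = bot"
  unfolding no_zero_divisors_def using bot.extremum_uniqueI by blast

lemma adjoint_triple_le_sw_bot:
  "adjoint_triple cj sw nw \<Longrightarrow> no_zero_divisors cj \<Longrightarrow> x \<le> sw bot y \<Longrightarrow> x = bot \<or> y = bot"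
  using adjoint_triple_sw_iff no_zero_divisors_le_bot by metis

lemma adjoint_triple_le_nw_bot:
  "adjoint_triple cj sw nw \<Longrightarrow> no_zero_divisors cj \<Longrightarrow> y \<le> nw bot x \<Longrightarrow> x = bot \<or> y = bot"
  using adjoint_triple_nw_iff no_zero_divisors_le_bot by metis

lemma frame_at:
  "frame n cj sw nw \<Longrightarrow> i \<in> {1..n} \<Longrightarrow> adjoint_triple (cj i) (sw i) (nw i) \<and> no_zero_divisors (cj i)"
  unfolding frame_def by blast

lemma top_ne_bot_if_fun_ne_bot:
  assumes "(h :: 'x \<Rightarrow> 'l::{order_bot,order_top}) \<noteq> (\<lambda>_. bot)"
  shows "(top::'l) \<noteq> bot"
proof
  assume "(top::'l) = bot"
  then have "h x = bot" for x
    using top_greatest[of "h x"] by (simp add: bot.extremum_unique)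
  then show False using assms by blast
qed

definition block_diagonal :: "('o \<Rightarrow> 'at \<Rightarrow> 'c::order_bot) \<Rightarrow> 'o set \<Rightarrow> 'at set \<Rightarrow> bool" where
  "block_diagonal R Y X \<longleftrightarrow> (\<forall>a b. (a \<in> Y) \<noteq> (b \<in> X) \<longrightarrow> R a b = bot)"

lemma upN_op_ne_bot_imp_rel_bot:
  assumes "adjoint_triple (cjo (\<sigma>o a b)) (swo (\<sigma>o a b)) (nwo (\<sigma>o a b))"
    and "no_zero_divisors (cjo (\<sigma>o a b))"
    and "upN_op swo \<sigma>o R g a \<noteq> bot" and "g b = bot"
  shows "R a b = bot"
proof -
  have "upN_op swo \<sigma>o R g a \<le> swo (\<sigma>o a b) (g b) (R a b)"
    unfolding upN_op_def by (rule Inf_lower) blast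
  then show ?thesis using adjoint_triple_le_sw_bot assms by metis
qed

lemma downN_op_ne_bot_imp_rel_bot:
  assumes "adjoint_triple (cjp (\<sigma>p a b)) (swp (\<sigma>p a b)) (nwp (\<sigma>p a b))"
    and "no_zero_divisors (cjp (\<sigma>p a b))"
    and "downN_op nwp \<sigma>p R f b \<noteq> bot" and "f a = bot"
  shows "R a b = bot"
proof -
  have "downN_op nwp \<sigma>p R f b \<le> nwp (\<sigma>p a b) (f a) (R a b)"
    unfolding downN_op_def by (rule Inf_lower) blast
  then show ?thesis using adjoint_triple_le_nw_bot assms by metis
qed

lemma FN_chi_block_diagonal:
  fixes R :: "'o \<Rightarrow> 'at \<Rightarrow> 'c::order_bot"
  assumes "(chi X :: 'at \<Rightarrow> 'b::complete_lattice, chi Y :: 'o \<Rightarrow> 'a::complete_lattice)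
      \<in> FN swo \<sigma>o nwp \<sigma>p R"
    and "\<And>a b. adjoint_triple (cjo (\<sigma>o a b)) (swo (\<sigma>o a b)) (nwo (\<sigma>o a b))
      \<and> no_zero_divisors (cjo (\<sigma>o a b))"
    and "\<And>a b. adjoint_triple (cjp (\<sigma>p a b)) (swp (\<sigma>p a b)) (nwp (\<sigma>p a b))
      \<and> no_zero_divisors (cjp (\<sigma>p a b))"
    and "(top::'a) \<noteq> bot" and "(top::'b) \<noteq> bot"
  shows "block_diagonal R Y X"
  unfolding block_diagonal_def
proof (intro allI impI)
  fix a b
  have up: "upN_op swo \<sigma>o R (chi X) = chi Y" and down: "downN_op nwp \<sigma>p R (chi Y) = chi X"
    using assms(1) unfolding FN_def by auto
  assume "(a \<in> Y) \<noteq> (b \<in> X)"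
  then consider "a \<in> Y" "b \<notin> X" | "a \<notin> Y" "b \<in> X" by blast
  then show "R a b = bot"
  proof cases
    case 1
    then have "upN_op swo \<sigma>o R (chi X) a \<noteq> bot" "chi X b = bot"
      using up assms(4) by (simp_all add: chi_def)
    then show ?thesis using upN_op_ne_bot_imp_rel_bot assms(2) by metis
  next
    case 2
    then have "downN_op nwp \<sigma>p R (chi Y) b \<noteq> bot" "chi Y a = bot"
      using down assms(5) by (simp_all add: chi_def)
    then show ?thesis using downN_op_ne_bot_imp_rel_bot assms(3) by metis
  qed
qed

locale multi_adjoint_frame =
  fixes cj :: "nat \<Rightarrow> 'a::complete_lattice \<Rightarrow> 'b::complete_lattice \<Rightarrow> 'c::order_bot"
    and sw :: "nat \<Rightarrow> 'c \<Rightarrow> 'b \<Rightarrow> 'a"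
    and nw :: "nat \<Rightarrow> 'c \<Rightarrow> 'a \<Rightarrow> 'b"
    and \<sigma> :: "'o \<Rightarrow> 'at \<Rightarrow> nat"
  assumes adjoint: "adjoint_triple (cj (\<sigma> a b)) (sw (\<sigma> a b)) (nw (\<sigma> a b))"
    and no_zero_div: "no_zero_divisors (cj (\<sigma> a b))"
begin

lemma le_up_op_iff: "f \<le> up_op sw \<sigma> R g \<longleftrightarrow> (\<forall>a b. cj (\<sigma> a b) (f a) (g b) \<le> R a b)"
  unfolding up_op_def le_fun_def le_Inf_iff adjoint_triple_sw_iff[OF adjoint, symmetric] by blast

lemma le_down_op_iff: "g \<le> down_op nw \<sigma> R f \<longleftrightarrow> (\<forall>a b. cj (\<sigma> a b) (f a) (g b) \<le> R a b)"
  unfolding down_op_def le_fun_def le_Inf_iff adjoint_triple_nw_iff[OF adjoint, symmetric] by blast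

lemma le_up_down_op: "f \<le> up_op sw \<sigma> R (down_op nw \<sigma> R f)"
  using le_up_op_iff le_down_op_iff by blast

lemma le_down_up_op: "g \<le> down_op nw \<sigma> R (up_op sw \<sigma> R g)"
  using le_up_op_iff le_down_op_iff by blast

lemma up_op_eq_bot:
  assumes "R a b = bot" and "g b \<noteq> bot"
  shows "up_op sw \<sigma> R g a = bot"
proof -
  have "up_op sw \<sigma> R g a \<le> sw (\<sigma> a b) (R a b) (g b)"
    unfolding up_op_def by (rule Inf_lower) blast
  then show ?thesis using adjoint_triple_le_sw_bot adjoint no_zero_div assms by metis
qed

lemma down_op_eq_bot:
  assumes "R a b = bot" and "f a \<noteq> bot"
  shows "down_op nw \<sigma> R f b = bot"
proof -
  have "down_op nw \<sigma> R f b \<le> nw (\<sigma> a b) (R a b) (f a)"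
    unfolding down_op_def by (rule Inf_lower) blast
  then show ?thesis using adjoint_triple_le_nw_bot adjoint no_zero_div assms by metis
qed

lemma down_op_chi_le_chi:
  assumes "block_diagonal R Y X" and "Y \<noteq> {}" and "(top::'a) \<noteq> bot"
  shows "down_op nw \<sigma> R (chi Y) \<le> chi X"
proof (rule le_funI)
  fix b
  obtain a where "a \<in> Y" using assms(2) by blast
  then have "b \<notin> X \<Longrightarrow> down_op nw \<sigma> R (chi Y) b = bot"
    using assms(1,3) by (intro down_op_eq_bot[of R a]) (auto simp: block_diagonal_def chi_def)
  then show "down_op nw \<sigma> R (chi Y) b \<le> chi X b" by (auto simp: chi_def)
qed

lemma up_op_chi_le_chi:
  assumes "block_diagonal R Y X" and "X \<noteq> {}" and "(top::'b) \<noteq> bot"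
  shows "up_op sw \<sigma> R (chi X) \<le> chi Y"
proof (rule le_funI)
  fix a
  obtain b where "b \<in> X" using assms(2) by blast
  then have "a \<notin> Y \<Longrightarrow> up_op sw \<sigma> R (chi X) a = bot"
    using assms(1,3) by (intro up_op_eq_bot[of R a b]) (auto simp: block_diagonal_def chi_def)
  then show "up_op sw \<sigma> R (chi X) a \<le> chi Y a" by (auto simp: chi_def)
qed

lemma up_down_op_chi:
  assumes "block_diagonal R Y X" and "Y \<noteq> {}" and "(top::'a) \<noteq> bot"
    and "down_op nw \<sigma> R (chi Y) \<noteq> (\<lambda>_. bot)"
  shows "up_op sw \<sigma> R (down_op nw \<sigma> R (chi Y)) = chi Y"
proof (rule antisym[OF le_funI le_up_down_op])
  fix a
  let ?F = "down_op nw \<sigma> R (chi Y)"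
  obtain b where b: "?F b \<noteq> bot" using assms(4) by (meson ext)
  have "?F b \<le> chi X b" using down_op_chi_le_chi[OF assms(1-3)] by (rule le_funD)
  with b have "b \<in> X" by (auto simp: chi_def bot.extremum_unique split: if_splits)
  show "up_op sw \<sigma> R ?F a \<le> chi Y a"
  proof (cases "a \<in> Y")
    case False
    with \<open>b \<in> X\<close> assms(1) have "R a b = bot" by (simp add: block_diagonal_def)
    with b show ?thesis by (simp add: up_op_eq_bot)
  qed (simp add: chi_def)
qed

lemma down_up_op_chi:
  assumes "block_diagonal R Y X" and "X \<noteq> {}" and "(top::'b) \<noteq> bot"
    and "up_op sw \<sigma> R (chi X) \<noteq> (\<lambda>_. bot)"
  shows "down_op nw \<sigma> R (up_op sw \<sigma> R (chi X)) = chi X"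
proof (rule antisym[OF le_funI le_down_up_op])
  fix b
  let ?G = "up_op sw \<sigma> R (chi X)"
  obtain a where a: "?G a \<noteq> bot" using assms(4) by (meson ext)
  have "?G a \<le> chi Y a" using up_op_chi_le_chi[OF assms(1-3)] by (rule le_funD)
  with a have "a \<in> Y" by (auto simp: chi_def bot.extremum_unique split: if_splits)
  show "down_op nw \<sigma> R ?G b \<le> chi X b"
  proof (cases "b \<in> X")
    case False
    with \<open>a \<in> Y\<close> assms(1) have "R a b = bot" by (simp add: block_diagonal_def)
    with a show ?thesis by (simp add: down_op_eq_bot)
  qed (simp add: chi_def)
qed

end

theorem mainTheorem15:
  fixes cj :: "nat \<Rightarrow> 'a::complete_lattice \<Rightarrow> 'b::complete_lattice \<Rightarrow> 'c::{order_bot,order_top}"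
    and sw :: "nat \<Rightarrow> 'c \<Rightarrow> 'b \<Rightarrow> 'a"
    and nw :: "nat \<Rightarrow> 'c \<Rightarrow> 'a \<Rightarrow> 'b"
    and cjp :: "nat \<Rightarrow> 'c \<Rightarrow> 'b \<Rightarrow> 'a"
    and swp :: "nat \<Rightarrow> 'a \<Rightarrow> 'b \<Rightarrow> 'c"
    and nwp :: "nat \<Rightarrow> 'a \<Rightarrow> 'c \<Rightarrow> 'b"
    and cjo :: "nat \<Rightarrow> 'a \<Rightarrow> 'c \<Rightarrow> 'b"
    and swo :: "nat \<Rightarrow> 'b \<Rightarrow> 'c \<Rightarrow> 'a"
    and nwo :: "nat \<Rightarrow> 'b \<Rightarrow> 'a \<Rightarrow> 'c"
    and n m s :: nat
    and R :: "'o \<Rightarrow> 'at \<Rightarrow> 'c"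
    and \<sigma> \<sigma>p \<sigma>o :: "'o \<Rightarrow> 'at \<Rightarrow> nat"
    and g :: "'at \<Rightarrow> 'b" and f :: "'o \<Rightarrow> 'a"
  assumes "frame n cj sw nw"
    and "frame m cjp swp nwp"
    and "frame s cjo swo nwo"
    and "\<forall>a b. \<sigma> a b \<in> {1..n} \<and> \<sigma>p a b \<in> {1..m} \<and> \<sigma>o a b \<in> {1..s}"
    and "normalized R"
    and "(g, f) \<in> FC swo \<sigma>o nwp \<sigma>p R"
    and "up_op sw \<sigma> R g \<noteq> (\<lambda>_. bot)"
    and "down_op nw \<sigma> R f \<noteq> (\<lambda>_. bot)"
  shows "(down_op nw \<sigma> R f, f) \<in> MAC sw nw \<sigma> R
       \<and> (g, up_op sw \<sigma> R g) \<in> MAC sw nw \<sigma> R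
       \<and> concept_le (down_op nw \<sigma> R f, f) (g, up_op sw \<sigma> R g)"
proof -
  obtain X Y where g: "g = chi X" and f: "f = chi Y"
    and fixed: "(chi X, chi Y) \<in> FN swo \<sigma>o nwp \<sigma>p R" and "X \<noteq> {}" "Y \<noteq> {}"
    using assms(6) unfolding FC_def by blast
  have top: "(top::'a) \<noteq> bot" "(top::'b) \<noteq> bot"
    using assms(7,8) top_ne_bot_if_fun_ne_bot by blast+
  have index: "\<sigma> a b \<in> {1..n}" "\<sigma>p a b \<in> {1..m}" "\<sigma>o a b \<in> {1..s}" for a b
    using assms(4) by blast+
  interpret multi_adjoint_frame cj sw nw \<sigma>
    using frame_at[OF assms(1) index(1)] by unfold_locales blast+
  have "block_diagonal R Y X"
    using FN_chi_block_diagonal[OF fixed frame_at[OF assms(3) index(3)]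
        frame_at[OF assms(2) index(2)] top] .
  then show ?thesis
    using down_op_chi_le_chi up_down_op_chi down_up_op_chi \<open>X \<noteq> {}\<close> \<open>Y \<noteq> {}\<close> top assms(7,8)
    unfolding MAC_def concept_le_def g f by auto
qed

end
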